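(* Consider the approximate first-stage problem described in the context, with $\theta\in\Theta$. If this problem remains feasible when $z$ is fixed to some integer-valued $z^\star$, then the resulting fixed problem (optimization over $b$ and $y$ only) has an integer-valued optimal solution $(b^\star,y^\star)$, even when the integrality constraints on $y$ and $b$ are relaxed.
   Context: Data: a directed graph $\mathcal{G}_\text{RV}=(\mathcal{N}_\text{RV},\mathcal{E}_\text{RV})$ of one-step rebalancing-vehicle (RV) movements, a set $\mathcal{N}_\text{SV}$ of stations, a finite set $\mathcal{V}$ of RVs each with integer capacity $\overline{b}$, horizon $T$, integer bound $\overline{y}$, costs $c_{i,j}^t\in\mathbb{R}$, $r_i^t\ge0$. A parameter vector $\theta=(\theta_0,(\theta_i^t)_{i,t})$ with $\theta_0\in\mathbb{R}$ and $\theta_i^t=([\theta_i^t]_{-\overline{y}},\dots,[\theta_i^t]_{\overline{y}-1})\in\mathbb{R}^{2\overline{y}}$ defines $\overline{V}_i^t(\cdot;\theta_i^t):[-\overline{y},\overline{y}]\to\mathbb{R}$ as the continuous piecewise linear function with $\overline{V}_i^t(0)=0$ whose slope on $[m,m+1]$ is $[\theta_i^t]_m$ for $m=-\overline{y},\dots,\overline{y}-1$, and $\overline{V}(y;\theta)=\theta_0+\sum_{t=1}^T\sum_{i\in\mathcal{N}_\text{SV}\cap\mathcal{N}_\text{RV}}\overline{V}_i^t(y_i^{-,t}-y_i^{+,t};\theta_i^t)$. The admissible parameter set is $\Theta=\{\theta: -\theta^{\max}\le[\theta_i^t]_{m}\le\theta^{\max}\ \forall m,i,t;\ [\theta_i^t]_m\ge[\theta_i^t]_{m-1}\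 \text{for } m=-\overline{y}+1,\dots,\overline{y}-1,\ \forall i,t\}$ for a constant $\theta^{\max}>0$ (so each $\overline{V}_i^t$ is convex). The approximate first-stage problem is $$\min_{z,y,b}\ \sum_{t=1}^T\Big[\sum_{(i,j)\in\mathcal{E}_\text{RV}}c_{i,j}^tz_{i,j}^t+\sum_{i\in\mathcal{N}_\text{SV}\cap\mathcal{N}_\text{RV}}r_i^t(y_i^{+,t}+y_i^{-,t})\Big]+\overline{V}(y;\theta)$$ subject to: $\sum_{(i,j)\in\mathcal{E}_\text{RV}}b_{i,j}^t=\sum_{(j,i)\in\mathcal{E}_\text{RV}}b_{j,i}^{t-1}+y_i^{+,t}-y_i^{-,t}$ and $\sum_{(i,j)\in\mathcal{E}_\text{RV}}z_{i,j}^t=\sum_{(j,i)\in\mathcal{E}_\text{RV}}z_{j,i}^{t-1}$ for $t=1,\dots,T$, $i\in\mathcal{N}_\text{RV}$; $0\le b_{i,j}^t\le\overline{b}z_{i,j}^t$ for $t=0,\dots,T$ with integers $b_{i,j}^0$ given; $0\le y_i^{+,t}\le\overline{y}$, $0\le y_i^{-,t}\le\overline{y}$; integers $z_{i,j}^0$ given with $\sum_{i,j}z_{i,j}^0=|\mathcal{V}|$; $y,b$ integer-valued; $z_{i,j}^t$ integer-valued. (Variables $y_i^{\pm,t}$ are taken to be $0$ where not defined.) *)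

theory Defs
  imports Complex_Main
begin

text \<open>Piecewise linear function on [-ybar, ybar] with value 0 at 0 and slope th m
  on [m, m+1] for m = -ybar, ..., ybar-1 (written out explicitly).\<close>
definition Vpl :: "nat \<Rightarrow> (int \<Rightarrow> real) \<Rightarrow> real \<Rightarrow> real" where
  "Vpl ybar th x =
     (\<Sum>m\<in>{0..<int ybar}. th m * max 0 (min 1 (x - of_int m)))
   - (\<Sum>m\<in>{- int ybar..<0}. th m * max 0 (min 1 (of_int m + 1 - x)))"

text \<open>Admissible parameter set Theta (only the slopes; theta0 is unrestricted).\<close>
definition in_Theta ::
  "'n set \<Rightarrow> 'n set \<Rightarrow> nat \<Rightarrow> nat \<Rightarrow> real \<Rightarrow> (nat \<Rightarrow> 'n \<Rightarrow> int \<Rightarrow> real) \<Rightarrow> bool" where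
  "in_Theta NRV NSV T ybar thmax th \<longleftrightarrow>
     (\<forall>t\<in>{1..T}. \<forall>i\<in>NSV \<inter> NRV.
        (\<forall>m\<in>{- int ybar..<int ybar}. - thmax \<le> th t i m \<and> th t i m \<le> thmax) \<and>
        (\<forall>m\<in>{- int ybar + 1..<int ybar}. th t i m \<ge> th t i (m - 1)))"

definition yval :: "'n set \<Rightarrow> 'n set \<Rightarrow> (nat \<Rightarrow> 'n \<Rightarrow> real) \<Rightarrow> nat \<Rightarrow> 'n \<Rightarrow> real" where
  "yval NRV NSV y t i = (if i \<in> NSV \<inter> NRV then y t i else 0)"

definition fs_constraints ::
  "'n set \<Rightarrow> 'n set \<Rightarrow> ('n \<times> 'n) set \<Rightarrow> nat \<Rightarrow> nat \<Rightarrow> nat \<Rightarrow>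
   ('n \<Rightarrow> 'n \<Rightarrow> real) \<Rightarrow> ('n \<Rightarrow> 'n \<Rightarrow> real) \<Rightarrow>
   (nat \<Rightarrow> 'n \<Rightarrow> 'n \<Rightarrow> real) \<Rightarrow> (nat \<Rightarrow> 'n \<Rightarrow> 'n \<Rightarrow> real) \<Rightarrow>
   (nat \<Rightarrow> 'n \<Rightarrow> real) \<Rightarrow> (nat \<Rightarrow> 'n \<Rightarrow> real) \<Rightarrow> bool" where
  "fs_constraints NRV NSV E T bbar ybar z0 b0 z b yp ym \<longleftrightarrow>
     (\<forall>t\<in>{1..T}. \<forall>i\<in>NRV.
        (\<Sum>(i',j)\<in>{e\<in>E. fst e = i}. b t i' j)
          = (\<Sum>(j,i')\<in>{e\<in>E. snd e = i}. b (t - 1) j i')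
            + yval NRV NSV yp t i - yval NRV NSV ym t i) \<and>
     (\<forall>t\<in>{1..T}. \<forall>i\<in>NRV.
        (\<Sum>(i',j)\<in>{e\<in>E. fst e = i}. z t i' j)
          = (\<Sum>(j,i')\<in>{e\<in>E. snd e = i}. z (t - 1) j i')) \<and>
     (\<forall>t\<in>{0..T}. \<forall>(i,j)\<in>E. 0 \<le> b t i j \<and> b t i j \<le> real bbar * z t i j) \<and>
     (\<forall>(i,j)\<in>E. b 0 i j = b0 i j \<and> z 0 i j = z0 i j) \<and>
     (\<forall>t\<in>{1..T}. \<forall>i\<in>NSV \<inter> NRV.
        0 \<le> yp t i \<and> yp t i \<le> real ybar \<and> 0 \<le> ym t i \<and> ym t i \<le> real ybar)"

definition by_integral ::
  "'n set \<Rightarrow> 'n set \<Rightarrow> ('n \<times> 'n) set \<Rightarrow> nat \<Rightarrow>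
   (nat \<Rightarrow> 'n \<Rightarrow> 'n \<Rightarrow> real) \<Rightarrow> (nat \<Rightarrow> 'n \<Rightarrow> real) \<Rightarrow> (nat \<Rightarrow> 'n \<Rightarrow> real) \<Rightarrow> bool" where
  "by_integral NRV NSV E T b yp ym \<longleftrightarrow>
     (\<forall>t\<in>{0..T}. \<forall>(i,j)\<in>E. b t i j \<in> \<int>) \<and>
     (\<forall>t\<in>{1..T}. \<forall>i\<in>NSV \<inter> NRV. yp t i \<in> \<int> \<and> ym t i \<in> \<int>)"

definition fs_objective ::
  "'n set \<Rightarrow> 'n set \<Rightarrow> ('n \<times> 'n) set \<Rightarrow> nat \<Rightarrow> nat \<Rightarrow>
   (nat \<Rightarrow> 'n \<Rightarrow> 'n \<Rightarrow> real) \<Rightarrow> (nat \<Rightarrow> 'n \<Rightarrow> real) \<Rightarrow>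
   real \<Rightarrow> (nat \<Rightarrow> 'n \<Rightarrow> int \<Rightarrow> real) \<Rightarrow>
   (nat \<Rightarrow> 'n \<Rightarrow> 'n \<Rightarrow> real) \<Rightarrow> (nat \<Rightarrow> 'n \<Rightarrow> real) \<Rightarrow> (nat \<Rightarrow> 'n \<Rightarrow> real) \<Rightarrow> real" where
  "fs_objective NRV NSV E T ybar c r th0 th z yp ym =
     (\<Sum>t\<in>{1..T}. (\<Sum>(i,j)\<in>E. c t i j * z t i j)
                 + (\<Sum>i\<in>NSV \<inter> NRV. r t i * (yp t i + ym t i)))
   + (th0 + (\<Sum>t\<in>{1..T}. \<Sum>i\<in>NSV \<inter> NRV. Vpl ybar (th t i) (ym t i - yp t i)))"

end

theory Submission
  imports Defs "HOL-Library.FuncSet"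
begin

text \<open>With \<open>z\<close> fixed, the loads \<open>b\<close> and the net exchanges \<open>y\<^sup>+ - y\<^sup>-\<close> form a flow in a
  time-expanded network whose balance equations have integral right-hand sides and whose arc
  bounds are integral. Splitting an exchange \<open>d\<close> as \<open>y\<^sup>+ = max 0 d\<close>, \<open>y\<^sup>- = max 0 (-d)\<close> costs no
  more (as \<open>r \<ge> 0\<close>), and the resulting cost is a sum of functions of single arc flows, each affine
  on every unit interval \<open>[k, k + 1]\<close>.
  If some arc flow is fractional, then every constrained node touching a fractional arc touches
  at least two, so the fractional arcs outnumber the independent balance equations among them
  and carry a nonzero circulation. Moving along it, in whichever direction does not increase the
  cost, until a further arc becomes integral keeps every arc in its unit interval, where the cost
  is affine. So every feasible flow rounds to an integral one at no higher cost, and an optimum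
  exists among the finitely many integral feasible flows.\<close>

lemma homogeneous_system_nontrivial_solution:
  fixes M :: "'r \<Rightarrow> 'e \<Rightarrow> real"
  assumes "finite R" "finite F" "card R < card F"
  shows "\<exists>d. (\<forall>e. e \<notin> F \<longrightarrow> d e = 0) \<and> (\<exists>e\<in>F. d e \<noteq> 0) \<and>
             (\<forall>r\<in>R. (\<Sum>e\<in>F. M r e * d e) = 0)"
  using assms
proof (induction R arbitrary: F M rule: finite_induct)
  case empty
  then obtain e0 where "e0 \<in> F" by fastforce
  then show ?case by (intro exI[of _ "\<lambda>e. if e = e0 then 1 else 0"]) auto
next
  case (insert r R F M)
  show ?case
  proof (cases "\<forall>e\<in>F. M r e = 0")
    case True
    have "card R < card F" using insert by simp
    then obtain d where "\<forall>e. e \<notin> F \<longrightarrow> d e = 0" "\<exists>e\<in>F. d e \<noteq> 0"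
      "\<forall>q\<in>R. (\<Sum>e\<in>F. M q e * d e) = 0"
      using insert.IH[of F M] insert.prems by blast
    then show ?thesis using True by (intro exI[of _ d]) auto
  next
    case False
    then obtain u where u: "u \<in> F" "M r u \<noteq> 0" by blast
    \<comment> \<open>Gaussian elimination: row \<open>r\<close> eliminates the unknown \<open>u\<close> from the other rows.\<close>
    define M' where "M' = (\<lambda>q e. M q e - M q u * M r e / M r u)"
    obtain d' where d': "\<forall>e. e \<notin> F - {u} \<longrightarrow> d' e = 0" "\<exists>e\<in>F - {u}. d' e \<noteq> 0"
       "\<forall>q\<in>R. (\<Sum>e\<in>F - {u}. M' q e * d' e) = 0"
    proof -
      have "card R < card (F - {u})" using insert u by simp
      then show ?thesis using insert.IH[of "F - {u}" M'] insert.prems that by blast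
    qed
    define d where "d = d'(u := - (\<Sum>e\<in>F - {u}. M r e * d' e) / M r u)"
    have split: "(\<Sum>e\<in>F. M q e * d e) = M q u * d u + (\<Sum>e\<in>F - {u}. M q e * d' e)" for q
      using u insert.prems by (simp add: sum.remove d_def)
    have "(\<Sum>e\<in>F. M q e * d e) = 0" if "q \<in> insert r R" for q
    proof (cases "q = r")
      case False
      then have "(\<Sum>e\<in>F - {u}. M' q e * d' e) = 0" using d' that by simp
      then have "(\<Sum>e\<in>F - {u}. M q e * d' e) = M q u / M r u * (\<Sum>e\<in>F - {u}. M r e * d' e)"
        by (simp add: M'_def algebra_simps sum_subtractf sum_distrib_left)
      then show ?thesis using split[of q] u by (simp add: d_def)
    qed (use split[of r] u in \<open>simp add: d_def\<close>)
    then show ?thesis using d' u by (intro exI[of _ d]) (auto simp: d_def)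
  qed
qed

section \<open>Balance equations\<close>

definition balance :: "'e set \<Rightarrow> ('e \<Rightarrow> 'v) \<Rightarrow> ('e \<Rightarrow> 'v) \<Rightarrow> ('e \<Rightarrow> real) \<Rightarrow> 'v \<Rightarrow> real" where
  "balance A src dst x v = (\<Sum>e\<in>{e\<in>A. src e = v}. x e) - (\<Sum>e\<in>{e\<in>A. dst e = v}. x e)"

definition incidence :: "('e \<Rightarrow> 'v) \<Rightarrow> ('e \<Rightarrow> 'v) \<Rightarrow> 'v \<Rightarrow> 'e \<Rightarrow> real" where
  "incidence src dst v e = (if src e = v then 1 else 0) - (if dst e = v then 1 else 0)"

lemma balance_eq_incidence_sum:
  "finite A \<Longrightarrow> balance A src dst x v = (\<Sum>e\<in>A. incidence src dst v e * x e)"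
  by (simp add: balance_def incidence_def sum.inter_filter left_diff_distrib sum_subtractf
      if_distrib[of "\<lambda>c. c * x _"] cong: if_cong)

lemma balance_add_scaled:
  "finite A \<Longrightarrow> balance A src dst (\<lambda>e. x e + s * d e) v
     = balance A src dst x v + s * balance A src dst d v"
  by (simp add: balance_def sum.distrib sum_distrib_left algebra_simps)

lemma balance_uminus: "balance A src dst (\<lambda>e. - d e) v = - balance A src dst d v"
  by (simp add: balance_def sum_negf)

lemma balance_mono_neutral:
  assumes "finite A" "F \<subseteq> A" "\<And>e. e \<in> A - F \<Longrightarrow> d e = 0"
  shows "balance A src dst d v = balance F src dst d v"
  unfolding balance_def using assms
  by (intro arg_cong2[where f = "(-)"] sum.mono_neutral_right) auto

lemma sum_balance_eq_0:
  assumes "finite F" "finite N" "src ` F \<subseteq> N" "dst ` F \<subseteq> N"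
  shows "(\<Sum>v\<in>N. balance F src dst d v) = 0"
  using assms by (simp add: balance_def sum_subtractf sum.group)

lemma handshake:
  assumes "finite F" "finite N" "src ` F \<subseteq> N" "dst ` F \<subseteq> N" "\<And>e. e \<in> F \<Longrightarrow> src e \<noteq> dst e"
  shows "(\<Sum>v\<in>N. card {e\<in>F. src e = v \<or> dst e = v}) = 2 * card F"
proof -
  have "card {e\<in>F. src e = v \<or> dst e = v} = card {e\<in>F. src e = v} + card {e\<in>F. dst e = v}" for v
    using assms(1,5) by (subst card_Un_disjoint[symmetric]) (auto intro: arg_cong[where f = card], metis)
  moreover have "(\<Sum>v\<in>N. card {e\<in>F. g e = v}) = card F" if "g ` F \<subseteq> N" for g :: "'a \<Rightarrow> 'b"
    using sum.group[OF assms(1,2) that, of "\<lambda>_. 1::nat"] by simp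
  ultimately show ?thesis using assms(3,4) by (simp add: sum.distrib)
qed

section \<open>Functions affine on unit intervals\<close>

definition cellwise_affine :: "(real \<Rightarrow> real) \<Rightarrow> bool" where
  "cellwise_affine h \<longleftrightarrow> (\<forall>k::int. \<exists>a b. \<forall>y\<in>{of_int k..of_int k + 1}. h y = a * y + b)"

lemma cellwise_affine_const: "cellwise_affine (\<lambda>y. c)"
  unfolding cellwise_affine_def by (metis mult_zero_left add_0)

lemma cellwise_affine_add:
  assumes "cellwise_affine f" "cellwise_affine g"
  shows "cellwise_affine (\<lambda>y. f y + g y)"
  unfolding cellwise_affine_def
proof
  fix k :: int
  obtain a1 b1 a2 b2 where "\<forall>y\<in>{of_int k..of_int k + 1}. f y = a1 * y + b1"
    "\<forall>y\<in>{of_int k..of_int k + 1}. g y = a2 * y + b2"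
    using assms unfolding cellwise_affine_def by meson
  then show "\<exists>a b. \<forall>y\<in>{of_int k..of_int k + 1}. f y + g y = a * y + b"
    by (intro exI[of _ "a1 + a2"] exI[of _ "b1 + b2"]) (simp add: algebra_simps)
qed

lemma cellwise_affine_scale:
  assumes "cellwise_affine f"
  shows "cellwise_affine (\<lambda>y. c * f y)"
  unfolding cellwise_affine_def
proof
  fix k :: int
  obtain a b where "\<forall>y\<in>{of_int k..of_int k + 1}. f y = a * y + b"
    using assms unfolding cellwise_affine_def by meson
  then show "\<exists>a b. \<forall>y\<in>{of_int k..of_int k + 1}. c * f y = a * y + b"
    by (intro exI[of _ "c * a"] exI[of _ "c * b"]) (simp add: algebra_simps)
qed

lemma cellwise_affine_diff:
  assumes "cellwise_affine f" "cellwise_affine g"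
  shows "cellwise_affine (\<lambda>y. f y - g y)"
  using cellwise_affine_add[OF assms(1) cellwise_affine_scale[OF assms(2), of "-1"]] by simp

lemma cellwise_affine_sum:
  "(\<And>m. m \<in> S \<Longrightarrow> cellwise_affine (f m)) \<Longrightarrow> cellwise_affine (\<lambda>y. \<Sum>m\<in>S. f m y)"
  by (induction S rule: infinite_finite_induct)
    (auto intro: cellwise_affine_add cellwise_affine_const)

lemma cellwise_affine_shift:
  assumes "cellwise_affine h" "c \<in> \<int>"
  shows "cellwise_affine (\<lambda>y. h (y + c))"
  unfolding cellwise_affine_def
proof
  fix k :: int
  obtain m where c: "c = of_int m" using assms(2) Ints_cases by blast
  obtain a b where "\<forall>u\<in>{of_int (k + m)..of_int (k + m) + 1}. h u = a * u + b"
    using assms(1) unfolding cellwise_affine_def by meson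
  then show "\<exists>a b. \<forall>y\<in>{of_int k..of_int k + 1}. h (y + c) = a * y + b"
    by (intro exI[of _ a] exI[of _ "a * c + b"]) (auto simp: c algebra_simps)
qed

lemma cellwise_affine_reflect:
  assumes "cellwise_affine h"
  shows "cellwise_affine (\<lambda>y. h (- y))"
  unfolding cellwise_affine_def
proof
  fix k :: int
  obtain a b where "\<forall>u\<in>{of_int (- k - 1)..of_int (- k - 1) + 1}. h u = a * u + b"
    using assms unfolding cellwise_affine_def by meson
  then show "\<exists>a b. \<forall>y\<in>{of_int k..of_int k + 1}. h (- y) = a * y + b"
    by (intro exI[of _ "- a"] exI[of _ b]) auto
qed

lemma cellwise_affine_abs: "cellwise_affine abs"
  unfolding cellwise_affine_def
proof
  fix k :: int
  show "\<exists>a b. \<forall>y\<in>{of_int k..of_int k + 1::real}. \<bar>y\<bar> = a * y + b"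
  proof (cases "0 \<le> k")
    case True
    then have "\<forall>y\<in>{of_int k..of_int k + 1}. \<bar>y\<bar> = 1 * y + (0::real)" by force
    then show ?thesis by blast
  next
    case False
    then have "\<forall>y\<in>{of_int k..of_int k + 1}. \<bar>y\<bar> = (-1) * y + (0::real)" by force
    then show ?thesis by blast
  qed
qed

lemma cellwise_affine_clamp: "cellwise_affine (\<lambda>y. max 0 (min 1 y))"
  unfolding cellwise_affine_def
proof
  fix k :: int
  show "\<exists>a b. \<forall>y\<in>{of_int k..of_int k + 1::real}. max 0 (min 1 y) = a * y + b"
  proof (cases k "0::int" rule: linorder_cases)
    case less
    then have "\<forall>y\<in>{of_int k..of_int k + 1}. max 0 (min 1 y) = 0 * y + (0::real)"
      by (force simp: max_def min_def)
    then show ?thesis by blast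
  next
    case equal
    then have "\<forall>y\<in>{of_int k..of_int k + 1}. max 0 (min 1 y) = 1 * y + (0::real)"
      by (force simp: max_def min_def)
    then show ?thesis by blast
  next
    case greater
    then have "\<forall>y\<in>{of_int k..of_int k + 1}. max 0 (min 1 y) = 0 * y + (1::real)"
      by (force simp: max_def min_def)
    then show ?thesis by blast
  qed
qed

lemma cellwise_affine_Vpl: "cellwise_affine (Vpl ybar th)"
proof -
  have clamp_shift: "cellwise_affine (\<lambda>x. max 0 (min 1 (x + c)))" if "c \<in> \<int>" for c :: real
    using cellwise_affine_shift[OF cellwise_affine_clamp that] .
  have clamp_reflect: "cellwise_affine (\<lambda>x. max 0 (min 1 (- x + c)))" if "c \<in> \<int>" for c :: real
    using cellwise_affine_reflect[OF clamp_shift[OF that]] .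
  have Vpl_eq: "Vpl ybar th = (\<lambda>x. (\<Sum>m\<in>{0..<int ybar}. th m * max 0 (min 1 (x + of_int (- m))))
                       - (\<Sum>m\<in>{- int ybar..<0}. th m * max 0 (min 1 (- x + of_int (m + 1)))))"
    by (rule ext) (simp add: Vpl_def algebra_simps)
  show ?thesis unfolding Vpl_eq
    by (intro cellwise_affine_diff cellwise_affine_sum cellwise_affine_scale clamp_shift clamp_reflect)
      auto
qed

lemma cellwise_affine_at_floor:
  assumes "cellwise_affine h"
  shows "\<exists>a. \<forall>w\<in>{of_int \<lfloor>y\<rfloor>..of_int \<lfloor>y\<rfloor> + 1}. h w = h y + a * (w - y)"
proof -
  obtain a b where ab: "\<forall>w\<in>{of_int \<lfloor>y\<rfloor>..of_int \<lfloor>y\<rfloor> + 1}. h w = a * w + b"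
    using assms unfolding cellwise_affine_def by meson
  have "y \<in> {of_int \<lfloor>y\<rfloor>..of_int \<lfloor>y\<rfloor> + 1}" by simp
  then show ?thesis using ab by (intro exI[of _ a]) (simp add: algebra_simps)
qed

section \<open>Rounding in networks with integral data\<close>

lemma floor_cell_within_integer_bounds:
  fixes lo hi y :: real
  assumes "lo \<in> \<int>" "hi \<in> \<int>" "lo \<le> y" "y \<le> hi" "y \<notin> \<int>"
  shows "lo \<le> of_int \<lfloor>y\<rfloor>" "of_int \<lfloor>y\<rfloor> + 1 \<le> hi"
proof -
  obtain m n where mn: "lo = of_int m" "hi = of_int n" using assms(1,2) Ints_cases by metis
  have "y \<noteq> hi" using assms(2,5) by blast
  then have "y < of_int n" using assms(4) mn by simp
  then have "m \<le> \<lfloor>y\<rfloor>" "\<lfloor>y\<rfloor> < n"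
    using assms(3) mn by (auto simp: le_floor_iff floor_less_iff)
  then have "of_int m \<le> real_of_int \<lfloor>y\<rfloor>" "real_of_int (\<lfloor>y\<rfloor> + 1) \<le> of_int n"
    by (simp_all only: of_int_le_iff)
  then show "lo \<le> of_int \<lfloor>y\<rfloor>" "of_int \<lfloor>y\<rfloor> + 1 \<le> hi" using mn by simp_all
qed

lemma of_int_floor_less_if_not_Ints: "y \<notin> \<int> \<Longrightarrow> of_int \<lfloor>y\<rfloor> < y"
  by (metis Ints_of_int of_int_floor_le order_le_neq_trans)

lemma exists_step_to_cell_boundary:
  fixes x \<sigma> :: "'e \<Rightarrow> real"
  assumes "finite P" "P \<noteq> {}" "\<And>e. e \<in> P \<Longrightarrow> \<sigma> e \<noteq> 0 \<and> x e \<notin> \<int>"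
  obtains s where "s > 0"
    "\<And>e. e \<in> P \<Longrightarrow> x e + s * \<sigma> e \<in> {of_int \<lfloor>x e\<rfloor>..of_int \<lfloor>x e\<rfloor> + 1}"
    "\<exists>e\<in>P. x e + s * \<sigma> e \<in> \<int>"
proof -
  define boundary where
    "boundary e = (if \<sigma> e > 0 then of_int \<lfloor>x e\<rfloor> + 1 else (of_int \<lfloor>x e\<rfloor> :: real))" for e
  define \<tau> where "\<tau> e = (boundary e - x e) / \<sigma> e" for e
  have \<tau>_pos: "\<tau> e > 0" if "e \<in> P" for e
    using assms(3)[OF that] of_int_floor_less_if_not_Ints[of "x e"] real_of_int_floor_add_one_gt[of "x e"]
    by (auto simp: \<tau>_def boundary_def divide_pos_pos divide_neg_neg linorder_neq_iff)
  define s where "s = Min (\<tau> ` P)"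
  have "s \<in> \<tau> ` P" using assms(1,2) by (simp add: s_def)
  then obtain e0 where e0: "e0 \<in> P" "s = \<tau> e0" by blast
  have s_le: "s \<le> \<tau> e" if "e \<in> P" for e using assms(1) that by (simp add: s_def)
  have "x e + s * \<sigma> e \<in> {of_int \<lfloor>x e\<rfloor>..of_int \<lfloor>x e\<rfloor> + 1}" if e: "e \<in> P" for e
  proof -
    have "0 < s" using e0 \<tau>_pos by simp
    then have "\<sigma> e > 0 \<Longrightarrow> 0 < s * \<sigma> e" "\<sigma> e < 0 \<Longrightarrow> s * \<sigma> e < 0"
      by (simp_all add: mult_pos_neg)
    moreover have "s * \<sigma> e \<le> \<tau> e * \<sigma> e" if "\<sigma> e > 0"
      using s_le[OF e] that by (simp add: mult_right_mono)
    moreover have "\<tau> e * \<sigma> e \<le> s * \<sigma> e" if "\<sigma> e < 0"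
      using s_le[OF e] that by (simp add: mult_right_mono_neg)
    moreover have "\<tau> e * \<sigma> e = boundary e - x e" using assms(3)[OF e] by (simp add: \<tau>_def)
    ultimately show ?thesis using assms(3)[OF e] of_int_floor_less_if_not_Ints[of "x e"]
      by (auto simp: boundary_def linorder_neq_iff split: if_splits; linarith)
  qed
  moreover have "x e0 + s * \<sigma> e0 = boundary e0" using assms(3)[OF e0(1)] by (simp add: e0(2) \<tau>_def)
  then have "x e0 + s * \<sigma> e0 \<in> \<int>" by (simp add: boundary_def)
  ultimately show thesis using that e0 \<tau>_pos by blast
qed

locale integral_network =
  fixes A :: "'e set" and src dst :: "'e \<Rightarrow> 'v" and C :: "'v set"
    and net_supply :: "'v \<Rightarrow> real" and lower upper :: "'e \<Rightarrow> real"
  assumes finite_arcs: "finite A"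
    and no_loops: "\<And>e. e \<in> A \<Longrightarrow> src e \<noteq> dst e"
    and supply_integral: "\<And>v. v \<in> C \<Longrightarrow> net_supply v \<in> \<int>"
    and lower_integral: "\<And>e. e \<in> A \<Longrightarrow> lower e \<in> \<int>"
    and upper_integral: "\<And>e. e \<in> A \<Longrightarrow> upper e \<in> \<int>"
begin

definition feasible :: "('e \<Rightarrow> real) \<Rightarrow> bool" where
  "feasible x \<longleftrightarrow> (\<forall>e\<in>A. lower e \<le> x e \<and> x e \<le> upper e) \<and> (\<forall>v\<in>C. balance A src dst x v = net_supply v)"

definition fractional :: "('e \<Rightarrow> real) \<Rightarrow> 'e set" where
  "fractional x = {e\<in>A. x e \<notin> \<int>}"

lemma finite_fractional: "finite (fractional x)"
  using finite_arcs by (simp add: fractional_def)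

lemma fractional_arc_not_alone:
  assumes "\<forall>v\<in>C. balance A src dst x v = net_supply v" "e0 \<in> fractional x" "v \<in> C"
    and "src e0 = v \<or> dst e0 = v"
  shows "\<exists>e\<in>fractional x. e \<noteq> e0 \<and> (src e = v \<or> dst e = v)"
proof (rule ccontr)
  assume alone: "\<not> ?thesis"
  have e0: "e0 \<in> A" "x e0 \<notin> \<int>" using assms(2) by (auto simp: fractional_def)
  have "(\<Sum>e\<in>A - {e0}. incidence src dst v e * x e) \<in> \<int>"
  proof (intro Ints_sum)
    fix e assume "e \<in> A - {e0}"
    then have "x e \<in> \<int> \<or> incidence src dst v e = 0"
      using alone by (auto simp: fractional_def incidence_def)
    then show "incidence src dst v e * x e \<in> \<int>" by (auto simp: incidence_def)
  qed
  moreover have "net_supply v = incidence src dst v e0 * x e0 + (\<Sum>e\<in>A - {e0}. incidence src dst v e * x e)"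
    using assms(1,3) e0 finite_arcs by (simp add: balance_eq_incidence_sum sum.remove)
  ultimately have "incidence src dst v e0 * x e0 \<in> \<int>"
    using supply_integral[OF assms(3)] by (metis Ints_diff add_diff_cancel_right')
  moreover have "incidence src dst v e0 = 1 \<or> incidence src dst v e0 = -1"
    using assms(4) no_loops[OF e0(1)] by (auto simp: incidence_def)
  ultimately show False using e0(2) by (metis Ints_minus minus_minus mult_1 mult_minus_left)
qed

lemma exists_fractional_circulation:
  assumes balanced: "\<forall>v\<in>C. balance A src dst x v = net_supply v" and "fractional x \<noteq> {}"
  obtains d where "\<And>e. e \<notin> fractional x \<Longrightarrow> d e = 0" "\<exists>e\<in>fractional x. d e \<noteq> 0"
    "\<And>v. v \<in> C \<Longrightarrow> balance A src dst d v = 0"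
proof -
  define F where "F = fractional x"
  define N where "N = src ` F \<union> dst ` F"
  define deg where "deg v = card {e\<in>F. src e = v \<or> dst e = v}" for v
  have F: "finite F" "F \<subseteq> A" "F \<noteq> {}"
    using assms finite_fractional by (auto simp: F_def fractional_def)
  have N: "finite N" "src ` F \<subseteq> N" "dst ` F \<subseteq> N" using F by (auto simp: N_def)
  have degree_sum: "(\<Sum>v\<in>N. deg v) = 2 * card F"
    unfolding deg_def using F no_loops by (intro handshake N) auto
  have deg_pos: "1 \<le> deg v" if "v \<in> N" for v
    using that F(1) by (auto simp: N_def deg_def Suc_le_eq card_gt_0_iff)
  have deg_ge_2: "2 \<le> deg v" if "v \<in> N" "v \<in> C" for v
  proof -
    obtain e0 where e0: "e0 \<in> F" "src e0 = v \<or> dst e0 = v" using \<open>v \<in> N\<close> by (auto simp: N_def)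
    then obtain e1 where "e1 \<in> F" "e1 \<noteq> e0" "src e1 = v \<or> dst e1 = v"
      using fractional_arc_not_alone[OF balanced] \<open>v \<in> C\<close> by (auto simp: F_def)
    then have "card {e0, e1} \<le> deg v"
      unfolding deg_def using e0 F(1) by (intro card_mono) auto
    then show ?thesis using \<open>e1 \<noteq> e0\<close> by simp
  qed
  have kernel: "\<exists>d. (\<forall>e. e \<notin> F \<longrightarrow> d e = 0) \<and> (\<exists>e\<in>F. d e \<noteq> 0) \<and> (\<forall>v\<in>R. balance F src dst d v = 0)"
    if "R \<subseteq> N" "card R < card F" for R
    using homogeneous_system_nontrivial_solution[of R F "incidence src dst"] that N(1) F(1)
    by (simp add: balance_eq_incidence_sum finite_subset)
  obtain d where d: "\<forall>e. e \<notin> F \<longrightarrow> d e = 0" "\<exists>e\<in>F. d e \<noteq> 0" "\<forall>v\<in>N \<inter> C. balance F src dst d v = 0"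
  proof (cases "N \<subseteq> C")
    case True
    \<comment> \<open>All endpoints are constrained: then one of the balance equations is redundant.\<close>
    obtain v0 where v0: "v0 \<in> N" using F(3) by (auto simp: N_def)
    have "(\<Sum>v\<in>N. 2) \<le> (\<Sum>v\<in>N. deg v)" using True deg_ge_2 by (intro sum_mono) auto
    then have "card (N - {v0}) < card F" using degree_sum v0 N(1) F(1,3) card_gt_0_iff[of F] by simp
    then obtain d where d: "\<forall>e. e \<notin> F \<longrightarrow> d e = 0" "\<exists>e\<in>F. d e \<noteq> 0"
      "\<forall>v\<in>N - {v0}. balance F src dst d v = 0" using kernel by blast
    moreover have "balance F src dst d v0 = 0"
      using sum_balance_eq_0[OF F(1) N, of d] d(3) by (simp add: sum.remove[OF N(1) v0])
    ultimately show thesis using that by blast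
  next
    case False
    then obtain w where w: "w \<in> N" "w \<notin> C" by blast
    have "1 \<le> (\<Sum>v\<in>N - C. deg v)"
      using deg_pos[OF w(1)] member_le_sum[of w "N - C" deg] w N(1) by simp
    then have "(\<Sum>v\<in>N \<inter> C. 2) + 1 \<le> (\<Sum>v\<in>N \<inter> C. deg v) + (\<Sum>v\<in>N - C. deg v)"
      using deg_ge_2 by (intro add_mono sum_mono) auto
    also have "\<dots> = 2 * card F" using degree_sum N(1) by (metis Diff_eq sum.Int_Diff)
    finally have "card (N \<inter> C) < card F" by simp
    then show thesis using kernel that by blast
  qed
  have "balance A src dst d v = 0" if "v \<in> C" for v
  proof -
    have "balance A src dst d v = balance F src dst d v"
      using d(1) F finite_arcs by (intro balance_mono_neutral) auto
    also have "\<dots> = 0"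
    proof (cases "v \<in> N")
      case False
      then have no_arcs: "{e\<in>F. src e = v} = {}" "{e\<in>F. dst e = v} = {}" by (auto simp: N_def)
      show ?thesis unfolding balance_def no_arcs by simp
    qed (use d(3) that in auto)
    finally show ?thesis .
  qed
  then show thesis using that d by (auto simp: F_def)
qed

definition cost :: "('e \<Rightarrow> real \<Rightarrow> real) \<Rightarrow> ('e \<Rightarrow> real) \<Rightarrow> real" where
  "cost g x = (\<Sum>e\<in>A. g e (x e))"

lemma exists_integralizing_move:
  assumes "feasible x"
    and support: "\<And>e. e \<notin> fractional x \<Longrightarrow> d e = 0" and nonzero: "\<exists>e\<in>fractional x. d e \<noteq> 0"
    and circulation: "\<And>v. v \<in> C \<Longrightarrow> balance A src dst d v = 0"
  obtains s where "s > 0" "feasible (\<lambda>e. x e + s * d e)"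
    "card (fractional (\<lambda>e. x e + s * d e)) < card (fractional x)"
    "\<And>e. x e + s * d e \<in> {of_int \<lfloor>x e\<rfloor>..of_int \<lfloor>x e\<rfloor> + 1}"
proof -
  define P where "P = {e \<in> fractional x. d e \<noteq> 0}"
  have "P \<subseteq> fractional x" by (auto simp: P_def)
  then have P: "finite P" "P \<noteq> {}" "\<And>e. e \<in> P \<Longrightarrow> d e \<noteq> 0 \<and> x e \<notin> \<int>"
    using finite_subset finite_fractional nonzero by (auto simp: P_def fractional_def)
  obtain s where s: "s > 0" "\<And>e. e \<in> P \<Longrightarrow> x e + s * d e \<in> {of_int \<lfloor>x e\<rfloor>..of_int \<lfloor>x e\<rfloor> + 1}"
    "\<exists>e\<in>P. x e + s * d e \<in> \<int>"
    using exists_step_to_cell_boundary[where x = x and \<sigma> = d, OF P] by blast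
  define x' where "x' = (\<lambda>e. x e + s * d e)"
  have unmoved: "x' e = x e" if "e \<notin> P" for e using support that by (auto simp: x'_def P_def)
  have cell: "x' e \<in> {of_int \<lfloor>x e\<rfloor>..of_int \<lfloor>x e\<rfloor> + 1}" for e
  proof (cases "e \<in> P")
    case False
    then show ?thesis using unmoved[OF False] by simp
  qed (use s(2) in \<open>simp add: x'_def\<close>)
  have "lower e \<le> x' e \<and> x' e \<le> upper e" if "e \<in> A" for e
  proof (cases "e \<in> P")
    case True
    then have "x e \<notin> \<int>" using P(3) by blast
    then show ?thesis
      using floor_cell_within_integer_bounds[OF lower_integral[OF that] upper_integral[OF that]]
        cell[of e] \<open>feasible x\<close> that by (force simp: feasible_def)
  qed (use unmoved \<open>feasible x\<close> that in \<open>auto simp: feasible_def\<close>)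
  moreover have "balance A src dst x' v = net_supply v" if "v \<in> C" for v
  proof -
    have "balance A src dst x' v = balance A src dst x v + s * balance A src dst d v"
      unfolding x'_def by (rule balance_add_scaled[OF finite_arcs])
    then show ?thesis using circulation[OF that] \<open>feasible x\<close> that by (simp add: feasible_def)
  qed
  ultimately have "feasible x'" by (simp add: feasible_def)
  moreover have "card (fractional x') < card (fractional x)"
  proof -
    have "fractional x' \<subseteq> fractional x" using unmoved by (auto simp: fractional_def P_def)
    moreover obtain e1 where "e1 \<in> P" "x' e1 \<in> \<int>" using s(3) by (auto simp: x'_def)
    ultimately have "fractional x' \<subset> fractional x" by (auto simp: fractional_def P_def)
    then show ?thesis using finite_fractional by (rule psubset_card_mono[rotated])
  qed
  ultimately show thesis using that s(1) cell unfolding x'_def by blast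
qed

lemma rounding_step:
  assumes "feasible x" "fractional x \<noteq> {}" "\<And>e. e \<in> A \<Longrightarrow> cellwise_affine (g e)"
  obtains x' where "feasible x'" "card (fractional x') < card (fractional x)" "cost g x' \<le> cost g x"
proof -
  obtain d where d: "\<And>e. e \<notin> fractional x \<Longrightarrow> d e = 0" "\<exists>e\<in>fractional x. d e \<noteq> 0"
    "\<And>v. v \<in> C \<Longrightarrow> balance A src dst d v = 0"
  proof (rule exists_fractional_circulation)
    show "\<forall>v\<in>C. balance A src dst x v = net_supply v" using assms(1) by (simp add: feasible_def)
  qed (use assms(2) in blast)+
  have "\<forall>e\<in>A. \<exists>a. \<forall>w\<in>{of_int \<lfloor>x e\<rfloor>..of_int \<lfloor>x e\<rfloor> + 1}. g e w = g e (x e) + a * (w - x e)"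
    using cellwise_affine_at_floor assms(3) by blast
  then have "\<exists>a. \<forall>e\<in>A. \<forall>w\<in>{of_int \<lfloor>x e\<rfloor>..of_int \<lfloor>x e\<rfloor> + 1}. g e w = g e (x e) + a e * (w - x e)"
    by (rule bchoice)
  then obtain a where slope:
    "\<forall>e\<in>A. \<forall>w\<in>{of_int \<lfloor>x e\<rfloor>..of_int \<lfloor>x e\<rfloor> + 1}. g e w = g e (x e) + a e * (w - x e)"
    by blast
  \<comment> \<open>Within the unit cells of \<open>x\<close> the cost is affine, so one of the directions \<open>d\<close>, \<open>-d\<close>
    does not increase it.\<close>
  have cost_move: "cost g (\<lambda>e. x e + s * \<sigma> e) = cost g x + s * (\<Sum>e\<in>A. a e * \<sigma> e)"
    if in_cell: "\<And>e. x e + s * \<sigma> e \<in> {of_int \<lfloor>x e\<rfloor>..of_int \<lfloor>x e\<rfloor> + 1}" for s \<sigma>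
  proof -
    have "g e (x e + s * \<sigma> e) = g e (x e) + s * (a e * \<sigma> e)" if "e \<in> A" for e
      using slope[rule_format, OF that in_cell] by simp
    then have "cost g (\<lambda>e. x e + s * \<sigma> e) = (\<Sum>e\<in>A. g e (x e) + s * (a e * \<sigma> e))"
      unfolding cost_def by (intro sum.cong) simp_all
    then show ?thesis by (simp add: cost_def sum.distrib sum_distrib_left)
  qed
  obtain s1 where s1: "s1 > 0" "feasible (\<lambda>e. x e + s1 * d e)"
    "card (fractional (\<lambda>e. x e + s1 * d e)) < card (fractional x)"
    "\<And>e. x e + s1 * d e \<in> {of_int \<lfloor>x e\<rfloor>..of_int \<lfloor>x e\<rfloor> + 1}"
    using exists_integralizing_move[OF assms(1) d] by blast
  obtain s2 where s2: "s2 > 0" "feasible (\<lambda>e. x e + s2 * - d e)"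
    "card (fractional (\<lambda>e. x e + s2 * - d e)) < card (fractional x)"
    "\<And>e. x e + s2 * - d e \<in> {of_int \<lfloor>x e\<rfloor>..of_int \<lfloor>x e\<rfloor> + 1}"
  proof (rule exists_integralizing_move[OF assms(1)])
    show "- d e = 0" if "e \<notin> fractional x" for e using d(1)[OF that] by simp
    show "\<exists>e\<in>fractional x. - d e \<noteq> 0" using d(2) by simp
    show "balance A src dst (\<lambda>e. - d e) v = 0" if "v \<in> C" for v
      using d(3)[OF that] by (simp add: balance_uminus)
  qed blast
  show thesis
  proof (cases "(\<Sum>e\<in>A. a e * d e) \<le> 0")
    case True
    have "cost g (\<lambda>e. x e + s1 * d e) \<le> cost g x"
      using cost_move[of s1 d, OF s1(4)] s1(1) True by (simp add: mult_nonneg_nonpos)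
    then show thesis using that s1(2,3) by blast
  next
    case False
    have "cost g (\<lambda>e. x e + s2 * - d e) \<le> cost g x"
      using cost_move[of s2 "\<lambda>e. - d e", OF s2(4)] s2(1) False by (simp add: sum_negf)
    then show thesis using that s2(2,3) by blast
  qed
qed

lemma exists_integral_rounding:
  assumes "feasible x" "\<And>e. e \<in> A \<Longrightarrow> cellwise_affine (g e)"
  shows "\<exists>x'. feasible x' \<and> fractional x' = {} \<and> cost g x' \<le> cost g x"
  using assms(1)
proof (induction "card (fractional x)" arbitrary: x rule: less_induct)
  case less
  show ?case
  proof (cases "fractional x = {}")
    case False
    obtain x' where "feasible x'" "card (fractional x') < card (fractional x)" "cost g x' \<le> cost g x"
      using less.prems False assms(2) by (rule rounding_step)
    then show ?thesis using less.hyps by (meson order_trans)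
  qed (use less.prems in blast)
qed

lemma exists_integral_optimum:
  assumes "feasible x0" "\<And>e. e \<in> A \<Longrightarrow> cellwise_affine (g e)"
  shows "\<exists>x. feasible x \<and> fractional x = {} \<and> (\<forall>x'. feasible x' \<longrightarrow> cost g x \<le> cost g x')"
proof -
  define integral_costs where "integral_costs = cost g ` {x. feasible x \<and> fractional x = {}}"
  \<comment> \<open>Integral feasible points are determined on \<open>A\<close> by finitely many integer values.\<close>
  have "integral_costs \<subseteq> cost g ` (\<Pi>\<^sub>E e\<in>A. of_int ` {\<lceil>lower e\<rceil>..\<lfloor>upper e\<rfloor>})"
  proof
    fix c assume "c \<in> integral_costs"
    then obtain x where x: "feasible x" "fractional x = {}" "c = cost g x"
      by (auto simp: integral_costs_def)
    have "x e \<in> of_int ` {\<lceil>lower e\<rceil>..\<lfloor>upper e\<rfloor>}" if "e \<in> A" for e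
    proof -
      have "x e \<in> \<int>" using x(2) that by (auto simp: fractional_def)
      then obtain k where "x e = of_int k" by (rule Ints_cases)
      then show ?thesis using x(1) that by (auto simp: feasible_def ceiling_le_iff le_floor_iff)
    qed
    then have "restrict x A \<in> (\<Pi>\<^sub>E e\<in>A. of_int ` {\<lceil>lower e\<rceil>..\<lfloor>upper e\<rfloor>})" by simp
    moreover have "cost g (restrict x A) = c" using x(3) by (simp add: cost_def)
    ultimately show "c \<in> cost g ` (\<Pi>\<^sub>E e\<in>A. of_int ` {\<lceil>lower e\<rceil>..\<lfloor>upper e\<rfloor>})" by force
  qed
  then have finite: "finite integral_costs"
    by (rule finite_subset) (simp add: finite_PiE finite_arcs)
  have nonempty: "integral_costs \<noteq> {}"
    using exists_integral_rounding[of x0 g, OF assms] by (auto simp: integral_costs_def)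
  obtain x where x: "feasible x" "fractional x = {}" "cost g x = Min integral_costs"
    using Min_in[OF finite nonempty] by (auto simp: integral_costs_def)
  have "cost g x \<le> cost g x'" if x': "feasible x'" for x'
  proof -
    obtain x'' where "feasible x''" "fractional x'' = {}" "cost g x'' \<le> cost g x'"
      using exists_integral_rounding[of x' g, OF x' assms(2)] by blast
    then show ?thesis using x(3) Min_le[OF finite] by (force simp: integral_costs_def)
  qed
  then show ?thesis using x(1,2) by blast
qed

end

section \<open>The first-stage problem with fixed fleet movements\<close>

type_synonym 'n arc = "(nat \<times> 'n \<times> 'n) + (nat \<times> 'n)"

locale fixed_fleet =
  fixes NRV NSV :: "'n set" and E :: "('n \<times> 'n) set" and T bbar ybar :: nat
    and z0 b0 :: "'n \<Rightarrow> 'n \<Rightarrow> real" and zs :: "nat \<Rightarrow> 'n \<Rightarrow> 'n \<Rightarrow> real"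
  assumes finite_NRV: "finite NRV" and edges_subset: "E \<subseteq> NRV \<times> NRV"
    and b0_integral: "\<And>i j. (i, j) \<in> E \<Longrightarrow> b0 i j \<in> \<int>"
    and zs_integral: "\<And>t i j. t \<le> T \<Longrightarrow> (i, j) \<in> E \<Longrightarrow> zs t i j \<in> \<int>"
    and fs_feasible: "\<exists>b yp ym. fs_constraints NRV NSV E T bbar ybar z0 b0 zs b yp ym"
begin

text \<open>Node \<open>Some (t, i)\<close> carries the balance equation of node \<open>i\<close> in period \<open>t\<close>. The load arc
  \<open>Inl (t, i, j)\<close> carries \<open>b t i j\<close> from \<open>Some (t, i)\<close> to \<open>Some (t + 1, j)\<close>, the exchange arc
  \<open>Inr (t, i)\<close> carries \<open>yp t i - ym t i\<close> into \<open>Some (t, i)\<close>, and the initial loads \<open>b0\<close> enter as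
  supply in period 1. The unconstrained node \<open>None\<close> absorbs all remaining arc ends.\<close>

definition arcs :: "'n arc set" where
  "arcs = Inl ` ({1..T} \<times> E) \<union> Inr ` ({1..T} \<times> (NSV \<inter> NRV))"

definition tail :: "'n arc \<Rightarrow> (nat \<times> 'n) option" where
  "tail = case_sum (\<lambda>(t, i, j). Some (t, i)) (\<lambda>_. None)"

definition head :: "'n arc \<Rightarrow> (nat \<times> 'n) option" where
  "head = case_sum (\<lambda>(t, i, j). if t < T then Some (t + 1, j) else None) (\<lambda>(t, i). Some (t, i))"

definition nodes :: "(nat \<times> 'n) option set" where
  "nodes = Some ` ({1..T} \<times> NRV)"

definition node_supply :: "(nat \<times> 'n) option \<Rightarrow> real" where
  "node_supply v = (case v of
     Some (t, i) \<Rightarrow> if t = 1 then (\<Sum>(j, i')\<in>{e\<in>E. snd e = i}. b0 j i') else 0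
   | None \<Rightarrow> 0)"

definition arc_lower :: "'n arc \<Rightarrow> real" where
  "arc_lower = case_sum (\<lambda>_. 0) (\<lambda>_. - real ybar)"

definition arc_upper :: "'n arc \<Rightarrow> real" where
  "arc_upper = case_sum (\<lambda>(t, i, j). real bbar * zs t i j) (\<lambda>_. real ybar)"

lemma finite_edges: "finite E"
  using finite_subset[OF edges_subset] finite_NRV by blast

sublocale network: integral_network arcs tail head nodes node_supply arc_lower arc_upper
proof
  show "finite arcs" using finite_edges finite_NRV by (simp add: arcs_def)
  show "tail e \<noteq> head e" if "e \<in> arcs" for e
    using that by (auto simp: arcs_def tail_def head_def split: if_splits)
  show "node_supply v \<in> \<int>" if "v \<in> nodes" for v
    using that b0_integral by (auto simp: nodes_def node_supply_def intro!: Ints_sum)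
  show "arc_lower e \<in> \<int>" for e by (simp add: arc_lower_def split: sum.split)
  show "arc_upper e \<in> \<int>" if "e \<in> arcs" for e
    using that zs_integral by (auto simp: arcs_def arc_upper_def)
qed

lemma balance_at_node:
  assumes "t \<in> {1..T}"
  shows "balance arcs tail head x (Some (t, i)) =
    (\<Sum>q\<in>{q\<in>E. fst q = i}. x (Inl (t, q)))
    - (\<Sum>q\<in>{q\<in>E. snd q = i \<and> t \<noteq> 1}. x (Inl (t - 1, q)))
    - (if i \<in> NSV \<inter> NRV then x (Inr (t, i)) else 0)"
proof -
  have outgoing: "{e\<in>arcs. tail e = Some (t, i)} = (\<lambda>q. Inl (t, q)) ` {q\<in>E. fst q = i}"
    using assms by (auto simp: arcs_def tail_def)
  have incoming: "{e\<in>arcs. head e = Some (t, i)} =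
      (\<lambda>q. Inl (t - 1, q)) ` {q\<in>E. snd q = i \<and> t \<noteq> 1} \<union> Inr ` ({(t, i)} \<inter> {p. i \<in> NSV \<inter> NRV})"
    using assms by (auto simp: arcs_def head_def image_iff split: if_splits)
  have "(\<Sum>e\<in>{e\<in>arcs. head e = Some (t, i)}. x e) =
      (\<Sum>q\<in>{q\<in>E. snd q = i \<and> t \<noteq> 1}. x (Inl (t - 1, q))) + (if i \<in> NSV \<inter> NRV then x (Inr (t, i)) else 0)"
    unfolding incoming using finite_edges
    by (subst sum.union_disjoint) (auto simp: sum.reindex inj_on_def)
  moreover have "(\<Sum>e\<in>{e\<in>arcs. tail e = Some (t, i)}. x e) = (\<Sum>q\<in>{q\<in>E. fst q = i}. x (Inl (t, q)))"
    unfolding outgoing by (simp add: sum.reindex inj_on_def)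
  ultimately show ?thesis by (simp add: balance_def)
qed

lemma balance_eq_supply_iff:
  assumes t: "t \<in> {1..T}"
    and loads: "\<And>t' i' j. t' \<in> {1..T} \<Longrightarrow> (i', j) \<in> E \<Longrightarrow> x (Inl (t', i', j)) = b t' i' j"
    and initial: "\<And>i' j. (i', j) \<in> E \<Longrightarrow> b 0 i' j = b0 i' j"
    and exchange: "i \<in> NSV \<inter> NRV \<Longrightarrow> x (Inr (t, i)) = yp t i - ym t i"
  shows "balance arcs tail head x (Some (t, i)) = node_supply (Some (t, i)) \<longleftrightarrow>
    (\<Sum>(i', j)\<in>{e\<in>E. fst e = i}. b t i' j)
      = (\<Sum>(j, i')\<in>{e\<in>E. snd e = i}. b (t - 1) j i') + yval NRV NSV yp t i - yval NRV NSV ym t i"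
proof -
  have "(\<Sum>q\<in>{q\<in>E. fst q = i}. x (Inl (t, q))) = (\<Sum>(i', j)\<in>{e\<in>E. fst e = i}. b t i' j)"
    using t loads by (intro sum.cong) auto
  moreover have "(\<Sum>q\<in>{q\<in>E. snd q = i \<and> t \<noteq> 1}. x (Inl (t - 1, q))) + node_supply (Some (t, i))
      = (\<Sum>(j, i')\<in>{e\<in>E. snd e = i}. b (t - 1) j i')"
  proof (cases "t = 1")
    case True
    have "(\<Sum>(j, i')\<in>{e\<in>E. snd e = i}. b0 j i') = (\<Sum>(j, i')\<in>{e\<in>E. snd e = i}. b 0 j i')"
      using initial by (intro sum.cong) auto
    then show ?thesis using True by (simp add: node_supply_def)
  next
    case False
    then have "t - 1 \<in> {1..T}" using t by auto
    then have "(\<Sum>q\<in>{q\<in>E. snd q = i}. x (Inl (t - 1, q))) = (\<Sum>(j, i')\<in>{e\<in>E. snd e = i}. b (t - 1) j i')"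
      using loads by (intro sum.cong) auto
    then show ?thesis using False by (simp add: node_supply_def)
  qed
  moreover have "(if i \<in> NSV \<inter> NRV then x (Inr (t, i)) else 0) = yval NRV NSV yp t i - yval NRV NSV ym t i"
    using exchange by (simp add: yval_def)
  ultimately show ?thesis by (auto simp: balance_at_node[OF t])
qed

definition encode ::
  "(nat \<Rightarrow> 'n \<Rightarrow> 'n \<Rightarrow> real) \<Rightarrow> (nat \<Rightarrow> 'n \<Rightarrow> real) \<Rightarrow> (nat \<Rightarrow> 'n \<Rightarrow> real) \<Rightarrow> 'n arc \<Rightarrow> real" where
  "encode b yp ym = case_sum (\<lambda>(t, i, j). b t i j) (\<lambda>(t, i). yp t i - ym t i)"

definition decode_b :: "('n arc \<Rightarrow> real) \<Rightarrow> nat \<Rightarrow> 'n \<Rightarrow> 'n \<Rightarrow> real" where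
  "decode_b x t i j = (if t \<in> {1..T} then x (Inl (t, i, j)) else b0 i j)"

definition decode_yp :: "('n arc \<Rightarrow> real) \<Rightarrow> nat \<Rightarrow> 'n \<Rightarrow> real" where
  "decode_yp x t i = max 0 (x (Inr (t, i)))"

definition decode_ym :: "('n arc \<Rightarrow> real) \<Rightarrow> nat \<Rightarrow> 'n \<Rightarrow> real" where
  "decode_ym x t i = max 0 (- x (Inr (t, i)))"

lemma encode_feasible:
  assumes fs: "fs_constraints NRV NSV E T bbar ybar z0 b0 zs b yp ym"
  shows "network.feasible (encode b yp ym)"
  unfolding network.feasible_def
proof
  have "0 \<le> b t i j \<and> b t i j \<le> real bbar * zs t i j" if "t \<in> {1..T}" "(i, j) \<in> E" for t i j
    using fs that unfolding fs_constraints_def by fastforce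
  moreover have "0 \<le> yp t i \<and> yp t i \<le> real ybar \<and> 0 \<le> ym t i \<and> ym t i \<le> real ybar"
    if "t \<in> {1..T}" "i \<in> NSV \<inter> NRV" for t i
    using fs that unfolding fs_constraints_def by blast
  ultimately show "\<forall>e\<in>arcs. arc_lower e \<le> encode b yp ym e \<and> encode b yp ym e \<le> arc_upper e"
    by (force simp: arcs_def arc_lower_def arc_upper_def encode_def)
  show "\<forall>v\<in>nodes. balance arcs tail head (encode b yp ym) v = node_supply v"
  proof
    fix v assume "v \<in> nodes"
    then obtain t i where v: "v = Some (t, i)" "t \<in> {1..T}" "i \<in> NRV" by (auto simp: nodes_def)
    show "balance arcs tail head (encode b yp ym) v = node_supply v"
      unfolding v(1) using fs v(2,3)
      by (subst balance_eq_supply_iff[where b = b and yp = yp and ym = ym])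
        (auto simp: encode_def fs_constraints_def)
  qed
qed

lemma decode_feasible:
  assumes x: "network.feasible x"
  shows "fs_constraints NRV NSV E T bbar ybar z0 b0 zs (decode_b x) (decode_yp x) (decode_ym x)"
proof -
  obtain b' yp' ym' where fs': "fs_constraints NRV NSV E T bbar ybar z0 b0 zs b' yp' ym'"
    using fs_feasible by blast
  have bounds: "arc_lower e \<le> x e \<and> x e \<le> arc_upper e" if "e \<in> arcs" for e
    using x that by (simp add: network.feasible_def)
  have "(\<Sum>(i', j)\<in>{e\<in>E. fst e = i}. decode_b x t i' j)
      = (\<Sum>(j, i')\<in>{e\<in>E. snd e = i}. decode_b x (t - 1) j i')
        + yval NRV NSV (decode_yp x) t i - yval NRV NSV (decode_ym x) t i"
    if t: "t \<in> {1..T}" and i: "i \<in> NRV" for t i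
  proof (subst balance_eq_supply_iff[symmetric, OF t])
    have "Some (t, i) \<in> nodes" using t i by (simp add: nodes_def)
    then show "balance arcs tail head x (Some (t, i)) = node_supply (Some (t, i))"
      using x by (simp add: network.feasible_def)
  qed (simp_all add: decode_b_def decode_yp_def decode_ym_def)
  moreover have "0 \<le> decode_b x t i j \<and> decode_b x t i j \<le> real bbar * zs t i j"
    if "t \<in> {0..T}" "(i, j) \<in> E" for t i j
  proof (cases "t = 0")
    case True
    then show ?thesis using fs' that unfolding fs_constraints_def decode_b_def by fastforce
  next
    case False
    then have "Inl (t, i, j) \<in> arcs" using that by (simp add: arcs_def)
    then show ?thesis using bounds False that by (force simp: decode_b_def arc_lower_def arc_upper_def)
  qed
  moreover have "0 \<le> decode_yp x t i \<and> decode_yp x t i \<le> real ybar \<and>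
      0 \<le> decode_ym x t i \<and> decode_ym x t i \<le> real ybar"
    if "t \<in> {1..T}" "i \<in> NSV \<inter> NRV" for t i
  proof -
    have "Inr (t, i) \<in> arcs" using that by (simp add: arcs_def)
    then show ?thesis using bounds by (force simp: decode_yp_def decode_ym_def arc_lower_def arc_upper_def)
  qed
  moreover have "\<forall>t\<in>{1..T}. \<forall>i\<in>NRV. (\<Sum>(i', j)\<in>{e\<in>E. fst e = i}. zs t i' j)
      = (\<Sum>(j, i')\<in>{e\<in>E. snd e = i}. zs (t - 1) j i')"
    and "\<forall>(i, j)\<in>E. decode_b x 0 i j = b0 i j \<and> zs 0 i j = z0 i j"
    using fs' unfolding fs_constraints_def decode_b_def by auto
  ultimately show ?thesis unfolding fs_constraints_def by blast
qed

lemma decode_integral: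
  assumes "network.fractional x = {}"
  shows "by_integral NRV NSV E T (decode_b x) (decode_yp x) (decode_ym x)"
proof -
  have integral: "x e \<in> \<int>" if "e \<in> arcs" for e
    using assms that by (auto simp: network.fractional_def)
  have "decode_b x t i j \<in> \<int>" if "(i, j) \<in> E" for t i j
    using integral[of "Inl (t, i, j)"] b0_integral[OF that] that by (auto simp: decode_b_def arcs_def)
  moreover have "decode_yp x t i \<in> \<int> \<and> decode_ym x t i \<in> \<int>"
    if "t \<in> {1..T}" "i \<in> NSV \<inter> NRV" for t i
    using integral[of "Inr (t, i)"] that by (auto simp: decode_yp_def decode_ym_def arcs_def max_def)
  ultimately show ?thesis by (auto simp: by_integral_def)
qed

definition arc_cost ::
  "(nat \<Rightarrow> 'n \<Rightarrow> real) \<Rightarrow> (nat \<Rightarrow> 'n \<Rightarrow> int \<Rightarrow> real) \<Rightarrow> 'n arc \<Rightarrow> real \<Rightarrow> real" where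
  "arc_cost r th e y = (case e of Inl _ \<Rightarrow> 0 | Inr (t, i) \<Rightarrow> r t i * \<bar>y\<bar> + Vpl ybar (th t i) (- y))"

definition fixed_cost :: "(nat \<Rightarrow> 'n \<Rightarrow> 'n \<Rightarrow> real) \<Rightarrow> real \<Rightarrow> real" where
  "fixed_cost c th0 = (\<Sum>t\<in>{1..T}. \<Sum>(i, j)\<in>E. c t i j * zs t i j) + th0"

lemma cellwise_affine_arc_cost: "cellwise_affine (arc_cost r th e)"
proof (cases e)
  case (Inl a)
  have "arc_cost r th (Inl a) = (\<lambda>y. 0)" by (simp add: arc_cost_def fun_eq_iff)
  then show ?thesis using Inl cellwise_affine_const by simp
next
  case (Inr p)
  obtain t i where "p = (t, i)" by fastforce
  then have "arc_cost r th e = (\<lambda>y. r t i * \<bar>y\<bar> + Vpl ybar (th t i) (- y))"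
    using Inr by (simp add: arc_cost_def fun_eq_iff)
  then show ?thesis
    by (simp add: cellwise_affine_add cellwise_affine_scale cellwise_affine_abs
        cellwise_affine_reflect cellwise_affine_Vpl)
qed

lemma cost_arc_cost:
  "network.cost (arc_cost r th) x =
     (\<Sum>t\<in>{1..T}. \<Sum>i\<in>NSV \<inter> NRV. r t i * \<bar>x (Inr (t, i))\<bar> + Vpl ybar (th t i) (- x (Inr (t, i))))"
proof -
  have "network.cost (arc_cost r th) x = (\<Sum>e\<in>arcs. arc_cost r th e (x e))"
    by (rule network.cost_def)
  also have "\<dots> = (\<Sum>e\<in>Inl ` ({1..T} \<times> E). arc_cost r th e (x e))
        + (\<Sum>e\<in>Inr ` ({1..T} \<times> (NSV \<inter> NRV)). arc_cost r th e (x e))"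
    unfolding arcs_def using finite_edges finite_NRV by (intro sum.union_disjoint) auto
  also have "\<dots> = (\<Sum>p\<in>{1..T} \<times> (NSV \<inter> NRV). arc_cost r th (Inr p) (x (Inr p)))"
    by (simp add: arc_cost_def sum.reindex)
  finally show ?thesis by (simp add: sum.cartesian_product arc_cost_def split_def)
qed

lemma fs_objective_eq:
  "fs_objective NRV NSV E T ybar c r th0 th zs yp ym = fixed_cost c th0 +
     (\<Sum>t\<in>{1..T}. \<Sum>i\<in>NSV \<inter> NRV. r t i * (yp t i + ym t i) + Vpl ybar (th t i) (ym t i - yp t i))"
  by (simp add: fs_objective_def fixed_cost_def sum.distrib)

lemma fs_objective_decode:
  "fs_objective NRV NSV E T ybar c r th0 th zs (decode_yp x) (decode_ym x)
     = fixed_cost c th0 + network.cost (arc_cost r th) x"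
proof -
  have "decode_yp x t i + decode_ym x t i = \<bar>x (Inr (t, i))\<bar>"
    and "decode_ym x t i - decode_yp x t i = - x (Inr (t, i))" for t i
    by (auto simp: decode_yp_def decode_ym_def max_def)
  then show ?thesis by (simp add: fs_objective_eq cost_arc_cost)
qed

lemma cost_encode_le_fs_objective:
  assumes r: "\<forall>t\<in>{1..T}. \<forall>i\<in>NSV \<inter> NRV. r t i \<ge> 0"
    and fs: "fs_constraints NRV NSV E T bbar ybar z0 b0 zs b yp ym"
  shows "fixed_cost c th0 + network.cost (arc_cost r th) (encode b yp ym)
           \<le> fs_objective NRV NSV E T ybar c r th0 th zs yp ym"
proof -
  have "r t i * \<bar>yp t i - ym t i\<bar> \<le> r t i * (yp t i + ym t i)"
    if "t \<in> {1..T}" "i \<in> NSV \<inter> NRV" for t i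
  proof (rule mult_left_mono)
    have "0 \<le> yp t i" "0 \<le> ym t i" using fs that unfolding fs_constraints_def by auto
    then show "\<bar>yp t i - ym t i\<bar> \<le> yp t i + ym t i" by (simp add: abs_le_iff)
  qed (use r that in blast)
  then show ?thesis
    unfolding fs_objective_eq cost_arc_cost
    by (simp add: encode_def) (intro sum_mono add_right_mono, auto)
qed

end

theorem proposition3:
  fixes NRV NSV :: "'n set" and E :: "('n \<times> 'n) set" and V :: "'v set"
    and T bbar ybar :: nat
    and c :: "nat \<Rightarrow> 'n \<Rightarrow> 'n \<Rightarrow> real" and r :: "nat \<Rightarrow> 'n \<Rightarrow> real"
    and th0 thmax :: real and th :: "nat \<Rightarrow> 'n \<Rightarrow> int \<Rightarrow> real"
    and z0 b0 :: "'n \<Rightarrow> 'n \<Rightarrow> real"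
    and zs :: "nat \<Rightarrow> 'n \<Rightarrow> 'n \<Rightarrow> real"
  assumes "finite NRV" and "E \<subseteq> NRV \<times> NRV" and "finite V"
    and "\<forall>t\<in>{1..T}. \<forall>i\<in>NSV \<inter> NRV. r t i \<ge> 0"
    and "thmax > 0" and "in_Theta NRV NSV T ybar thmax th"
    and "\<forall>(i,j)\<in>E. z0 i j \<in> \<int> \<and> b0 i j \<in> \<int>"
    and "(\<Sum>(i,j)\<in>E. z0 i j) = real (card V)"
    and "\<forall>t\<in>{0..T}. \<forall>(i,j)\<in>E. zs t i j \<in> \<int>"
    and "\<exists>b yp ym. fs_constraints NRV NSV E T bbar ybar z0 b0 zs b yp ym
                  \<and> by_integral NRV NSV E T b yp ym"
  shows "\<exists>b yp ym. fs_constraints NRV NSV E T bbar ybar z0 b0 zs b yp ym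
                  \<and> by_integral NRV NSV E T b yp ym
                  \<and> (\<forall>b' yp' ym'. fs_constraints NRV NSV E T bbar ybar z0 b0 zs b' yp' ym' \<longrightarrow>
                       fs_objective NRV NSV E T ybar c r th0 th zs yp ym
                         \<le> fs_objective NRV NSV E T ybar c r th0 th zs yp' ym')"
proof -
  interpret fixed_fleet NRV NSV E T bbar ybar z0 b0 zs
    using assms(1,2,7,9,10) by unfold_locales auto
  obtain b yp ym where fs: "fs_constraints NRV NSV E T bbar ybar z0 b0 zs b yp ym"
    using assms(10) by blast
  obtain x where x: "network.feasible x" "network.fractional x = {}"
    and optimal: "\<And>x'. network.feasible x' \<Longrightarrow>
      network.cost (arc_cost r th) x \<le> network.cost (arc_cost r th) x'"
    using network.exists_integral_optimum[where g = "arc_cost r th",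
        OF encode_feasible[OF fs] cellwise_affine_arc_cost] by blast
  show ?thesis
  proof (intro exI conjI allI impI)
    show "fs_constraints NRV NSV E T bbar ybar z0 b0 zs (decode_b x) (decode_yp x) (decode_ym x)"
      using x(1) by (rule decode_feasible)
    show "by_integral NRV NSV E T (decode_b x) (decode_yp x) (decode_ym x)"
      using x(2) by (rule decode_integral)
    fix b' yp' ym' assume fs': "fs_constraints NRV NSV E T bbar ybar z0 b0 zs b' yp' ym'"
    have "fs_objective NRV NSV E T ybar c r th0 th zs (decode_yp x) (decode_ym x)
        = fixed_cost c th0 + network.cost (arc_cost r th) x"
      by (rule fs_objective_decode)
    also have "\<dots> \<le> fixed_cost c th0 + network.cost (arc_cost r th) (encode b' yp' ym')"
      using optimal[OF encode_feasible[OF fs']] by simp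
    also have "\<dots> \<le> fs_objective NRV NSV E T ybar c r th0 th zs yp' ym'"
      using assms(4) fs' by (rule cost_encode_le_fs_objective)
    finally show "fs_objective NRV NSV E T ybar c r th0 th zs (decode_yp x) (decode_ym x)
        \<le> fs_objective NRV NSV E T ybar c r th0 th zs yp' ym'" .
  qed
qed

end
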